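(* Let $d>0$ and let $\triangle ABC$ be a geodesic triangle in hyperbolic space. Suppose that for each vertex $V\in\{A,B,C\}$, the ball of radius $d+\operatorname{arccosh}(2/\sqrt3)$ centered at $V$ is separated by a hyperplane from the other two vertices. Then the Fermat point $F$ of $\triangle ABC$ lies inside the triangle and $|FA|,|FB|,|FC|$ are all greater than $d$.
   Context: The Fermat point of a geodesic triangle $\triangle ABC$ is the point $F$ of the $2$-simplex spanned by the triangle minimizing $|FA|+|FB|+|FC|$. *)

theory Defs
  imports "HOL-Analysis.Analysis"
begin

text \<open>Hyperboloid model of hyperbolic space of dimension DIM('a):
  ambient Minkowski space is real x 'a, with the Lorentzian form
  minner (t,x) (s,y) = x . y - t s.\<close>

definition minner :: "real \<times> 'a::real_inner \<Rightarrow> real \<times> 'a \<Rightarrow> real" where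
  "minner p q = snd p \<bullet> snd q - fst p * fst q"

definition hyp_space :: "(real \<times> 'a::real_inner) set" where
  "hyp_space = {p. fst p > 0 \<and> minner p p = -1}"

definition hdist :: "real \<times> 'a::real_inner \<Rightarrow> real \<times> 'a \<Rightarrow> real" where
  "hdist p q = arcosh (- minner p q)"

definition hball :: "real \<times> 'a::real_inner \<Rightarrow> real \<Rightarrow> (real \<times> 'a) set" where
  "hball V r = {p \<in> hyp_space. hdist V p \<le> r}"

text \<open>A hyperbolic hyperplane is the intersection of hyp_space with a linear
  hyperplane {p. minner p v = 0} with spacelike normal v (minner v v > 0).\<close>
definition hyp_separated :: "(real \<times> 'a::real_inner) set \<Rightarrow> (real \<times> 'a) set \<Rightarrow> bool" where
  "hyp_separated S T \<longleftrightarrow> (\<exists>v. minner v v > 0 \<and>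
      (\<forall>p\<in>S. minner p v \<ge> 0) \<and> (\<forall>p\<in>T. minner p v \<le> 0))"

text \<open>Radial projection of a future timelike vector onto the hyperboloid.\<close>
definition hnormalize :: "real \<times> 'a::real_inner \<Rightarrow> real \<times> 'a" where
  "hnormalize p = (1 / sqrt (- minner p p)) *\<^sub>R p"

text \<open>The (geodesically convex) 2-simplex spanned by A, B, C, and its relative interior.\<close>
definition hyp_simplex :: "real \<times> 'a::real_inner \<Rightarrow> real \<times> 'a \<Rightarrow> real \<times> 'a \<Rightarrow> (real \<times> 'a) set" where
  "hyp_simplex A B C = {hnormalize (a *\<^sub>R A + b *\<^sub>R B + c *\<^sub>R C) | a b c.
      a \<ge> 0 \<and> b \<ge> 0 \<and> c \<ge> 0 \<and> a + b + c = 1}"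

definition hyp_simplex_interior :: "real \<times> 'a::real_inner \<Rightarrow> real \<times> 'a \<Rightarrow> real \<times> 'a \<Rightarrow> (real \<times> 'a) set" where
  "hyp_simplex_interior A B C = {hnormalize (a *\<^sub>R A + b *\<^sub>R B + c *\<^sub>R C) | a b c.
      a > 0 \<and> b > 0 \<and> c > 0 \<and> a + b + c = 1}"

definition fermat_point :: "real \<times> 'a::real_inner \<Rightarrow> real \<times> 'a \<Rightarrow> real \<times> 'a \<Rightarrow> real \<times> 'a \<Rightarrow> bool" where
  "fermat_point A B C F \<longleftrightarrow> F \<in> hyp_simplex A B C \<and>
     (\<forall>G \<in> hyp_simplex A B C. hdist F A + hdist F B + hdist F C \<le> hdist G A + hdist G B + hdist G C)"

end

theory Submission
  imports Defs
begin

text \<open>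
  A Fermat point F sees any two vertices at an angle of at least 120 degrees: otherwise, moving F
  along the bisector of the two directions decreases the sum of the two distances faster than the
  distance to the third vertex can grow. Consequently F cannot lie on a side, since from a point of
  side AB the directions to A and B are opposite and one of them makes an angle of at most
  90 degrees with the direction to C.

  If F were within distance d of A, the point at distance \<open>arcosh (2 / sqrt 3)\<close> from F towards
  the hyperplane separating the ball around A from B and C would lie in that ball. So the distance
  from F to the hyperplane would be at least \<open>arcosh (2 / sqrt 3)\<close>, the distance whose hyperbolic
  tangent is 1/2.
  From such a point, everything beyond the hyperplane is seen within 60 degrees of the
  perpendicular direction; in particular B and C are seen at an angle of less than 120 degrees.
\<close>

section \<open>Minkowski space and the hyperboloid\<close>

lemma minner_commute: "minner p q = minner q p"
  by (simp add: minner_def inner_commute mult.commute)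

lemma minner_add_left [simp]: "minner (p + q) r = minner p r + minner q r"
  by (simp add: minner_def inner_add_left algebra_simps)

lemma minner_add_right [simp]: "minner r (p + q) = minner r p + minner r q"
  by (simp add: minner_def inner_add_right algebra_simps)

lemma minner_diff_left [simp]: "minner (p - q) r = minner p r - minner q r"
  by (simp add: minner_def inner_diff_left algebra_simps)

lemma minner_diff_right [simp]: "minner r (p - q) = minner r p - minner r q"
  by (simp add: minner_def inner_diff_right algebra_simps)

lemma minner_minus_left [simp]: "minner (- p) r = - minner p r"
  by (simp add: minner_def)

lemma minner_minus_right [simp]: "minner r (- p) = - minner r p"
  by (simp add: minner_def)

lemma minner_scaleR_left [simp]: "minner (a *\<^sub>R p) r = a * minner p r"
  by (simp add: minner_def algebra_simps)

lemma minner_scaleR_right [simp]: "minner r (a *\<^sub>R p) = a * minner r p"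
  by (simp add: minner_def algebra_simps)

lemma minner_zero_left [simp]: "minner 0 r = 0"
  by (simp add: minner_def)

lemma minner_self: "minner p p = (norm (snd p))\<^sup>2 - (fst p)\<^sup>2"
  by (simp add: minner_def dot_square_norm power2_eq_square)

lemma hyp_spaceD:
  assumes "p \<in> hyp_space"
  shows "fst p > 0" "minner p p = -1" "(norm (snd p))\<^sup>2 = (fst p)\<^sup>2 - 1"
    "norm (snd p) < fst p" "fst p \<ge> 1"
proof -
  show pos: "fst p > 0" and "minner p p = -1"
    using assms by (auto simp: hyp_space_def)
  then show norm: "(norm (snd p))\<^sup>2 = (fst p)\<^sup>2 - 1"
    by (simp add: minner_self)
  then have "(norm (snd p))\<^sup>2 < (fst p)\<^sup>2" by simp
  then show "norm (snd p) < fst p"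
    using pos by (rule power2_less_imp_less[OF _ less_imp_le])
  have "1\<^sup>2 \<le> (fst p)\<^sup>2"
    using norm zero_le_power2[of "norm (snd p)"] by simp
  then show "fst p \<ge> 1"
    using pos by (rule power2_le_imp_le[OF _ less_imp_le])
qed

lemma future_timelike:
  assumes F: "F \<in> hyp_space" and x: "minner x x < 0" and xF: "minner x F < 0"
  shows "fst x > 0"
proof (rule ccontr)
  assume "\<not> fst x > 0"
  have "(norm (snd x))\<^sup>2 < (fst x)\<^sup>2"
    using x by (simp add: minner_self)
  then have "norm (snd x) < - fst x"
    using \<open>\<not> fst x > 0\<close> power2_less_imp_less[of "norm (snd x)" "- fst x"] by simp
  then have "norm (snd x) * norm (snd F) \<le> (- fst x) * fst F"
    using hyp_spaceD(4)[OF F] \<open>\<not> fst x > 0\<close> by (intro mult_mono) auto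
  moreover have "- (snd x \<bullet> snd F) \<le> norm (snd x) * norm (snd F)"
    using norm_cauchy_schwarz[of "- snd x" "snd F"] by simp
  ultimately show False
    using xF by (simp add: minner_def)
qed

lemma minner_hyp_space_le:
  assumes P: "P \<in> hyp_space" and Q: "Q \<in> hyp_space"
  shows "minner P Q \<le> -1"
proof -
  note p = hyp_spaceD[OF P] and q = hyp_spaceD[OF Q]
  have "(norm (snd P) * norm (snd Q))\<^sup>2 = ((fst P)\<^sup>2 - 1) * ((fst Q)\<^sup>2 - 1)"
    using p q by (simp add: power_mult_distrib)
  also have "\<dots> \<le> (fst P * fst Q - 1)\<^sup>2"
    using sum_squares_ge_zero[of "fst P - fst Q" 0] by (simp add: power2_eq_square algebra_simps)
  finally have "(norm (snd P) * norm (snd Q))\<^sup>2 \<le> (fst P * fst Q - 1)\<^sup>2" .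
  moreover have "0 \<le> fst P * fst Q - 1"
    using p(5) q(5) mult_mono[of 1 "fst P" 1 "fst Q"] by simp
  ultimately have "norm (snd P) * norm (snd Q) \<le> fst P * fst Q - 1"
    by (rule power2_le_imp_le)
  then show ?thesis
    using norm_cauchy_schwarz[of "snd P" "snd Q"] by (simp add: minner_def)
qed

lemma minner_tangent_nonneg:
  assumes F: "F \<in> hyp_space" and a: "minner F a = 0"
  shows "minner a a \<ge> 0"
proof -
  note f = hyp_spaceD[OF F]
  have "fst F * \<bar>fst a\<bar> = \<bar>snd F \<bullet> snd a\<bar>"
    using a f(1) by (simp add: minner_def abs_mult)
  also have "\<dots> \<le> norm (snd F) * norm (snd a)"
    by (rule Cauchy_Schwarz_ineq2)
  also have "\<dots> \<le> fst F * norm (snd a)"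
    using f(4) by (intro mult_right_mono) auto
  finally have "\<bar>fst a\<bar> \<le> norm (snd a)"
    using f(1) by simp
  then have "(fst a)\<^sup>2 \<le> (norm (snd a))\<^sup>2"
    by (metis abs_le_square_iff abs_norm_cancel)
  then show ?thesis
    by (simp add: minner_self)
qed

lemma quadratic_nonneg_discriminant:
  fixes a b c :: real
  assumes c: "0 \<le> c" and nonneg: "\<And>l. 0 \<le> a + 2 * b * l + c * l\<^sup>2"
  shows "b\<^sup>2 \<le> a * c"
proof (cases "c = 0")
  case True
  have "b = 0"
  proof (rule ccontr)
    assume "b \<noteq> 0"
    have "0 \<le> a + 2 * b * (- (a + 1) / (2 * b))"
      using nonneg[of "- (a + 1) / (2 * b)"] True by simp
    then show False
      using \<open>b \<noteq> 0\<close> by simp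
  qed
  then show ?thesis using True by simp
next
  case False
  then have "c > 0" using c by simp
  have "0 \<le> a + 2 * b * (- b / c) + c * (- b / c)\<^sup>2" by (rule nonneg)
  also have "\<dots> = (a * c - b\<^sup>2) / c"
    using \<open>c > 0\<close> by (simp add: power2_eq_square field_simps)
  finally show ?thesis
    using \<open>c > 0\<close> by (simp add: zero_le_divide_iff)
qed

lemma tangent_Cauchy_Schwarz:
  assumes F: "F \<in> hyp_space" and a: "minner F a = 0" and b: "minner F b = 0"
  shows "(minner a b)\<^sup>2 \<le> minner a a * minner b b"
proof -
  have "(minner a b)\<^sup>2 \<le> minner b b * minner a a"
  proof (rule quadratic_nonneg_discriminant)
    show "0 \<le> minner a a" by (rule minner_tangent_nonneg[OF F a])
    fix l :: real
    have "minner F (b + l *\<^sub>R a) = 0" using a b by simp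
    then have "0 \<le> minner (b + l *\<^sub>R a) (b + l *\<^sub>R a)" by (rule minner_tangent_nonneg[OF F])
    then show "0 \<le> minner b b + 2 * minner a b * l + minner a a * l\<^sup>2"
      by (simp add: minner_commute[of b a] algebra_simps power2_eq_square)
  qed
  then show ?thesis by (simp add: mult.commute)
qed

text \<open>\<open>(minner F P)\<^sup>2 - 1\<close> is the squared length of the tangential part \<open>P + minner F P *\<^sub>R F\<close>
  of P at F.\<close>
lemma minner_tangent_sq_le:
  assumes F: "F \<in> hyp_space" and P: "P \<in> hyp_space" and u: "minner F u = 0"
  shows "(minner u P)\<^sup>2 \<le> minner u u * ((minner F P)\<^sup>2 - 1)"
proof -
  define z where "z = P + minner F P *\<^sub>R F"
  have Fz: "minner F z = 0" using hyp_spaceD(2)[OF F] by (simp add: z_def)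
  have "minner z z = (minner F P)\<^sup>2 - 1"
    using hyp_spaceD(2)[OF F] hyp_spaceD(2)[OF P]
    by (simp add: z_def minner_commute[of P F] power2_eq_square algebra_simps)
  moreover have "minner u z = minner u P"
    using u by (simp add: z_def minner_commute[of u F])
  ultimately show ?thesis using tangent_Cauchy_Schwarz[OF F u Fz] by simp
qed

section \<open>Distance and geodesics\<close>

lemma cosh_hdist:
  assumes "P \<in> hyp_space" "Q \<in> hyp_space"
  shows "cosh (hdist P Q) = - minner P Q"
  using minner_hyp_space_le[OF assms] by (simp add: hdist_def)

lemma hdist_nonneg:
  assumes "P \<in> hyp_space" "Q \<in> hyp_space"
  shows "hdist P Q \<ge> 0"
  using minner_hyp_space_le[OF assms] by (simp add: hdist_def)

lemma sinh_hdist: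
  assumes "P \<in> hyp_space" "Q \<in> hyp_space"
  shows "sinh (hdist P Q) = sqrt ((minner P Q)\<^sup>2 - 1)"
  using minner_hyp_space_le[OF assms] by (simp add: hdist_def sinh_arcosh_real)

lemma sinh_hdist_sq:
  assumes "P \<in> hyp_space" "Q \<in> hyp_space"
  shows "(sinh (hdist P Q))\<^sup>2 = (minner P Q)\<^sup>2 - 1"
  using cosh_square_eq[of "hdist P Q"] by (simp add: cosh_hdist[OF assms])

lemma hdist_pos_iff:
  assumes "P \<in> hyp_space" "Q \<in> hyp_space"
  shows "hdist P Q > 0 \<longleftrightarrow> - minner P Q > 1"
  using minner_hyp_space_le[OF assms] by (auto simp: hdist_def)

lemma hdist_commute: "hdist p q = hdist q p"
  by (simp add: hdist_def minner_commute)

definition hgeodesic :: "real \<times> 'a::real_inner \<Rightarrow> real \<times> 'a \<Rightarrow> real \<Rightarrow> real \<times> 'a" where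
  "hgeodesic F u t = cosh t *\<^sub>R F + sinh t *\<^sub>R u"

lemma hgeodesic_in_hyp_space:
  assumes F: "F \<in> hyp_space" and u: "minner F u = 0" "minner u u = 1"
  shows "hgeodesic F u t \<in> hyp_space"
proof -
  let ?G = "hgeodesic F u t"
  have GG: "minner ?G ?G = -1"
    using hyp_spaceD(2)[OF F] u cosh_square_eq[of t]
    by (simp add: hgeodesic_def minner_commute[of u F] power2_eq_square algebra_simps)
  have "minner ?G F < 0"
    using hyp_spaceD(2)[OF F] u cosh_real_ge_1[of t]
    by (simp add: hgeodesic_def minner_commute[of u F])
  then have "fst ?G > 0"
    using future_timelike[OF F] GG by simp
  then show ?thesis
    using GG by (simp add: hyp_space_def)
qed

lemma hdist_hgeodesic_le:
  assumes F: "F \<in> hyp_space" and P: "P \<in> hyp_space"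
    and u: "minner F u = 0" "minner u u = 1" and t: "t \<ge> 0"
  shows "hdist (hgeodesic F u t) P \<le> t + hdist F P"
proof -
  define d where "d = hdist F P"
  have G: "hgeodesic F u t \<in> hyp_space"
    by (rule hgeodesic_in_hyp_space[OF F u])
  have "(minner u P)\<^sup>2 \<le> (sinh d)\<^sup>2"
    using minner_tangent_sq_le[OF F P u(1)] u(2) by (simp add: d_def sinh_hdist_sq[OF F P])
  then have "- minner u P \<le> sinh d"
    using hdist_nonneg[OF F P] abs_le_square_iff[of "minner u P" "sinh d"]
    by (simp add: d_def)
  then have sinh_bound: "sinh t * - minner u P \<le> sinh t * sinh d"
    using t by (intro mult_left_mono) auto
  have "cosh (hdist (hgeodesic F u t) P) = cosh t * cosh d + sinh t * - minner u P"
    using cosh_hdist[OF G P] cosh_hdist[OF F P]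
    by (simp add: d_def hgeodesic_def minner_commute[of _ P])
  also have "\<dots> \<le> cosh (t + d)"
    using sinh_bound by (simp add: cosh_add)
  finally have "cosh (hdist (hgeodesic F u t) P) \<le> cosh (t + d)" .
  then show ?thesis
    using t hdist_nonneg[OF G P] hdist_nonneg[OF F P]
    by (simp add: cosh_real_nonneg_le_iff d_def)
qed

text \<open>The unit tangent vector at F of the geodesic from F to P.\<close>
definition hdir :: "real \<times> 'a::real_inner \<Rightarrow> real \<times> 'a \<Rightarrow> real \<times> 'a" where
  "hdir F P = (1 / sinh (hdist F P)) *\<^sub>R (P + minner F P *\<^sub>R F)"

lemma minner_hdir_tangent:
  assumes "F \<in> hyp_space"
  shows "minner F (hdir F P) = 0"
  using hyp_spaceD(2)[OF assms] by (simp add: hdir_def)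

lemma minner_hdir_self:
  assumes F: "F \<in> hyp_space" and P: "P \<in> hyp_space" and pos: "hdist F P > 0"
  shows "minner (hdir F P) (hdir F P) = 1"
proof -
  define z where "z = P + minner F P *\<^sub>R F"
  have "minner z z = (minner F P)\<^sup>2 - 1"
    using hyp_spaceD(2)[OF F] hyp_spaceD(2)[OF P]
    by (simp add: z_def minner_commute[of P F] power2_eq_square algebra_simps)
  also have "\<dots> = (sinh (hdist F P))\<^sup>2"
    by (simp add: sinh_hdist_sq[OF F P])
  finally have zz: "minner z z = (sinh (hdist F P))\<^sup>2" .
  have "minner (hdir F P) (hdir F P) = (1 / sinh (hdist F P)) * ((1 / sinh (hdist F P)) * minner z z)"
    by (simp only: hdir_def z_def[symmetric] minner_scaleR_left minner_scaleR_right)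
  then show ?thesis
    using pos by (simp add: zz power2_eq_square)
qed

lemma scaleR_sinh_hdir:
  assumes "hdist F P > 0"
  shows "sinh (hdist F P) *\<^sub>R hdir F P = P + minner F P *\<^sub>R F"
  using assms by (simp add: hdir_def)

lemma minner_hdir:
  assumes F: "F \<in> hyp_space" and pos: "hdist F P > 0" and u: "minner F u = 0"
  shows "minner u P = sinh (hdist F P) * minner u (hdir F P)"
  using pos u by (simp add: hdir_def minner_commute[of u F])

lemma hdist_hgeodesic_has_derivative:
  assumes F: "F \<in> hyp_space" and P: "P \<in> hyp_space" and pos: "hdist F P > 0"
    and u: "minner F u = 0"
  shows "((\<lambda>t. hdist (hgeodesic F u t) P) has_real_derivative - minner u (hdir F P)) (at 0)"
proof -
  have c: "- minner F P > 1"
    using pos hdist_pos_iff[OF F P] by simp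
  let ?g = "\<lambda>t. - (cosh t * minner F P + sinh t * minner u P)"
  have "(arcosh has_real_derivative 1 / sqrt ((?g 0)\<^sup>2 - 1)) (at (?g 0))"
    using c by (intro arcosh_real_has_field_derivative) simp
  moreover have "(?g has_real_derivative - minner u P) (at 0)"
    by (auto intro!: derivative_eq_intros)
  ultimately have "((\<lambda>t. arcosh (?g t)) has_real_derivative
      1 / sqrt ((?g 0)\<^sup>2 - 1) * - minner u P) (at 0)"
    by (rule DERIV_chain2)
  moreover have "1 / sqrt ((?g 0)\<^sup>2 - 1) * - minner u P = - minner u (hdir F P)"
  proof -
    have "sqrt ((minner F P)\<^sup>2 - 1) > 0"
      using pos sinh_hdist[OF F P] sinh_real_pos_iff by metis
    then show ?thesis
      using minner_hdir[OF F pos u] by (simp add: sinh_hdist[OF F P])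
  qed
  moreover have "(\<lambda>t. hdist (hgeodesic F u t) P) = (\<lambda>t. arcosh (?g t))"
    by (simp add: hdist_def hgeodesic_def minner_commute[of _ P])
  ultimately show ?thesis
    by simp
qed

section \<open>The geodesic simplex\<close>

lemma hnormalize_in_hyp_space:
  assumes "fst X > 0" "minner X X < 0"
  shows "hnormalize X \<in> hyp_space"
proof -
  have "minner (hnormalize X) (hnormalize X) = minner X X / (sqrt (- minner X X))\<^sup>2"
    by (simp add: hnormalize_def power2_eq_square)
  also have "\<dots> = -1" using assms by simp
  finally show ?thesis
    using assms by (simp add: hyp_space_def hnormalize_def)
qed

lemma hnormalize_hyp_space: "X \<in> hyp_space \<Longrightarrow> hnormalize X = X"
  by (simp add: hnormalize_def hyp_space_def)

lemma hnormalize_scaleR: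
  assumes "r > 0"
  shows "hnormalize (r *\<^sub>R X) = hnormalize X"
proof -
  have "- minner (r *\<^sub>R X) (r *\<^sub>R X) = r\<^sup>2 * - minner X X"
    by (simp add: power2_eq_square)
  then have "sqrt (- minner (r *\<^sub>R X) (r *\<^sub>R X)) = sqrt (r\<^sup>2) * sqrt (- minner X X)"
    by (simp only: real_sqrt_mult)
  then have "sqrt (- minner (r *\<^sub>R X) (r *\<^sub>R X)) = r * sqrt (- minner X X)"
    using assms by simp
  then show ?thesis
    using assms by (simp add: hnormalize_def)
qed

lemma minner_nonneg_comb_le:
  assumes "P \<in> hyp_space" "A \<in> hyp_space" "B \<in> hyp_space" "C \<in> hyp_space"
    and "a \<ge> 0" "b \<ge> 0" "c \<ge> 0"
  shows "minner P (a *\<^sub>R A + b *\<^sub>R B + c *\<^sub>R C) \<le> - (a + b + c)"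
  using mult_left_mono[OF minner_hyp_space_le[of P A], of a]
    mult_left_mono[OF minner_hyp_space_le[of P B], of b]
    mult_left_mono[OF minner_hyp_space_le[of P C], of c] assms
  by simp

lemma nonneg_comb_timelike:
  assumes A: "A \<in> hyp_space" and B: "B \<in> hyp_space" and C: "C \<in> hyp_space"
    and abc: "a \<ge> 0" "b \<ge> 0" "c \<ge> 0" "a + b + c > 0"
  defines "X \<equiv> a *\<^sub>R A + b *\<^sub>R B + c *\<^sub>R C"
  shows "fst X > 0" "minner X X < 0"
proof -
  have "a * 1 + b * 1 + c * 1 \<le> a * fst A + b * fst B + c * fst C"
    using abc hyp_spaceD(5)[OF A] hyp_spaceD(5)[OF B] hyp_spaceD(5)[OF C]
    by (intro add_mono mult_left_mono) auto
  then show "fst X > 0"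
    using abc by (simp add: X_def)
  have "minner X X = a * minner A X + b * minner B X + c * minner C X"
    unfolding X_def by (simp only: minner_add_left minner_scaleR_left)
  also have "\<dots> \<le> a * - (a + b + c) + b * - (a + b + c) + c * - (a + b + c)"
    unfolding X_def using abc
    by (intro add_mono mult_left_mono minner_nonneg_comb_le A B C) auto
  also have "\<dots> = - (a + b + c)\<^sup>2"
    by (simp add: power2_eq_square algebra_simps)
  also have "\<dots> < 0"
    using abc by simp
  finally show "minner X X < 0" .
qed

lemma hnormalize_nonneg_comb_in_simplex:
  assumes "a \<ge> 0" "b \<ge> 0" "c \<ge> 0" "a + b + c > 0"
  shows "hnormalize (a *\<^sub>R A + b *\<^sub>R B + c *\<^sub>R C) \<in> hyp_simplex A B C"
proof -
  define s where "s = a + b + c"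
  have s: "s > 0" using assms(4) by (simp add: s_def)
  have "a *\<^sub>R A + b *\<^sub>R B + c *\<^sub>R C = s *\<^sub>R ((a / s) *\<^sub>R A + (b / s) *\<^sub>R B + (c / s) *\<^sub>R C)"
    using s by (simp add: scaleR_add_right)
  then have "hnormalize (a *\<^sub>R A + b *\<^sub>R B + c *\<^sub>R C)
      = hnormalize ((a / s) *\<^sub>R A + (b / s) *\<^sub>R B + (c / s) *\<^sub>R C)"
    using hnormalize_scaleR[OF s] by simp
  moreover have "a / s + b / s + c / s = 1"
    using s by (simp add: s_def add_divide_distrib[symmetric])
  moreover have "a / s \<ge> 0" "b / s \<ge> 0" "c / s \<ge> 0"
    using assms(1-3) s by simp_all
  ultimately show ?thesis
    unfolding hyp_simplex_def by blast
qed

lemma hyp_simplex_subset_hyp_space: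
  assumes "A \<in> hyp_space" "B \<in> hyp_space" "C \<in> hyp_space"
  shows "hyp_simplex A B C \<subseteq> hyp_space"
proof
  fix F assume "F \<in> hyp_simplex A B C"
  then obtain a b c where abc: "a \<ge> 0" "b \<ge> 0" "c \<ge> 0" "a + b + c = 1"
    and F: "F = hnormalize (a *\<^sub>R A + b *\<^sub>R B + c *\<^sub>R C)"
    unfolding hyp_simplex_def by blast
  show "F \<in> hyp_space"
    unfolding F using nonneg_comb_timelike[OF assms abc(1-3)] abc(4)
    by (intro hnormalize_in_hyp_space) simp_all
qed

lemma hyp_simplex_swap12: "hyp_simplex B A C = hyp_simplex A B C"
proof -
  have "hyp_simplex B A C \<subseteq> hyp_simplex A B C" for A B C :: "real \<times> 'a"
  proof
    fix x assume "x \<in> hyp_simplex B A C"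
    then obtain b a c where "b \<ge> 0" "a \<ge> 0" "c \<ge> 0" "b + a + c = 1"
      and x: "x = hnormalize (b *\<^sub>R B + a *\<^sub>R A + c *\<^sub>R C)"
      unfolding hyp_simplex_def by blast
    moreover have "x = hnormalize (a *\<^sub>R A + b *\<^sub>R B + c *\<^sub>R C)"
      unfolding x by (simp add: add_ac)
    moreover have "a + b + c = 1" using \<open>b + a + c = 1\<close> by simp
    ultimately show "x \<in> hyp_simplex A B C"
      unfolding hyp_simplex_def by blast
  qed
  then show ?thesis by blast
qed

lemma hyp_simplex_swap23: "hyp_simplex A C B = hyp_simplex A B C"
proof -
  have "hyp_simplex A C B \<subseteq> hyp_simplex A B C" for A B C :: "real \<times> 'a"
  proof
    fix x assume "x \<in> hyp_simplex A C B"
    then obtain a c b where "a \<ge> 0" "c \<ge> 0" "b \<ge> 0" "a + c + b = 1"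
      and x: "x = hnormalize (a *\<^sub>R A + c *\<^sub>R C + b *\<^sub>R B)"
      unfolding hyp_simplex_def by blast
    moreover have "x = hnormalize (a *\<^sub>R A + b *\<^sub>R B + c *\<^sub>R C)"
      unfolding x by (simp add: add_ac)
    moreover have "a + b + c = 1" using \<open>a + c + b = 1\<close> by simp
    ultimately show "x \<in> hyp_simplex A B C"
      unfolding hyp_simplex_def by blast
  qed
  then show ?thesis by blast
qed

lemma fermat_point_swap12: "fermat_point B A C F = fermat_point A B C F"
  unfolding fermat_point_def hyp_simplex_swap12[of A B C] by (simp add: add_ac)

lemma fermat_point_swap23: "fermat_point A C B F = fermat_point A B C F"
  unfolding fermat_point_def hyp_simplex_swap23[of A B C] by (simp add: add_ac)

lemma hyp_simplex_cone:
  assumes A: "A \<in> hyp_space" and B: "B \<in> hyp_space" and C: "C \<in> hyp_space"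
    and F: "F \<in> hyp_simplex A B C" and X: "X \<in> hyp_space"
    and X_eq: "X = l *\<^sub>R F + p *\<^sub>R A + q *\<^sub>R B + r *\<^sub>R C"
    and nonneg: "l \<ge> 0" "p \<ge> 0" "q \<ge> 0" "r \<ge> 0"
  shows "X \<in> hyp_simplex A B C"
proof -
  obtain a b c where abc: "a \<ge> 0" "b \<ge> 0" "c \<ge> 0" "a + b + c = 1"
    and F_eq: "F = hnormalize (a *\<^sub>R A + b *\<^sub>R B + c *\<^sub>R C)"
    using F by (auto simp: hyp_simplex_def)
  define Y where "Y = a *\<^sub>R A + b *\<^sub>R B + c *\<^sub>R C"
  define k where "k = l / sqrt (- minner Y Y)"
  have "minner Y Y < 0"
    using nonneg_comb_timelike(2)[OF A B C abc(1-3)] abc(4) by (simp add: Y_def)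
  then have k: "k \<ge> 0" using nonneg(1) by (simp add: k_def)
  have X_comb: "X = (k * a + p) *\<^sub>R A + (k * b + q) *\<^sub>R B + (k * c + r) *\<^sub>R C"
    by (simp add: X_eq F_eq Y_def[symmetric] hnormalize_def k_def)
      (simp add: Y_def scaleR_add_right scaleR_add_left)
  have coeffs: "k * a + p \<ge> 0" "k * b + q \<ge> 0" "k * c + r \<ge> 0"
    using k abc nonneg by simp_all
  have "(k * a + p) + (k * b + q) + (k * c + r) \<noteq> 0"
  proof
    assume "(k * a + p) + (k * b + q) + (k * c + r) = 0"
    then have "k * a + p = 0" "k * b + q = 0" "k * c + r = 0"
      using coeffs by linarith+
    then have "X = 0" by (simp add: X_comb)
    then show False using hyp_spaceD(1)[OF X] by simp
  qed
  then have "hnormalize X \<in> hyp_simplex A B C"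
    unfolding X_comb using coeffs by (intro hnormalize_nonneg_comb_in_simplex) simp_all
  then show ?thesis
    by (simp add: hnormalize_hyp_space[OF X])
qed

text \<open>The weighted sum is a multiple of F, because F is a multiple of \<open>a A + b B + c C\<close>, and it is
  tangent at F; hence it vanishes.\<close>
lemma hnormalize_tangent_balance:
  assumes A: "A \<in> hyp_space" and B: "B \<in> hyp_space" and C: "C \<in> hyp_space"
    and abc: "a \<ge> 0" "b \<ge> 0" "c \<ge> 0" "a + b + c > 0"
    and F_eq: "F = hnormalize (a *\<^sub>R A + b *\<^sub>R B + c *\<^sub>R C)"
  shows "a *\<^sub>R (A + minner F A *\<^sub>R F) + b *\<^sub>R (B + minner F B *\<^sub>R F) + c *\<^sub>R (C + minner F C *\<^sub>R F) = 0"
proof -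
  define Y where "Y = a *\<^sub>R A + b *\<^sub>R B + c *\<^sub>R C"
  define s where "s = sqrt (- minner Y Y)"
  have s: "s > 0" using nonneg_comb_timelike(2)[OF A B C abc] by (simp add: s_def Y_def)
  have F: "F \<in> hyp_space"
    using hyp_simplex_subset_hyp_space[OF A B C] hnormalize_nonneg_comb_in_simplex[OF abc] F_eq
    by blast
  have "Y = s *\<^sub>R F"
    using s by (simp add: F_eq Y_def[symmetric] hnormalize_def s_def)
  then have sum_eq: "a *\<^sub>R (A + minner F A *\<^sub>R F) + b *\<^sub>R (B + minner F B *\<^sub>R F) + c *\<^sub>R (C + minner F C *\<^sub>R F)
      = (s + a * minner F A + b * minner F B + c * minner F C) *\<^sub>R F"
    by (simp add: Y_def scaleR_add_right scaleR_add_left algebra_simps)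
  have "minner F (a *\<^sub>R (A + minner F A *\<^sub>R F) + b *\<^sub>R (B + minner F B *\<^sub>R F)
      + c *\<^sub>R (C + minner F C *\<^sub>R F)) = 0"
    using hyp_spaceD(2)[OF F] by simp
  then have "s + a * minner F A + b * minner F B + c * minner F C = 0"
    using hyp_spaceD(2)[OF F] by (simp add: sum_eq)
  then show ?thesis by (simp add: sum_eq)
qed

section \<open>Fermat points\<close>

lemma fermat_point_in_hyp_space:
  assumes "A \<in> hyp_space" "B \<in> hyp_space" "C \<in> hyp_space" "fermat_point A B C F"
  shows "F \<in> hyp_space"
  using hyp_simplex_subset_hyp_space[OF assms(1-3)] assms(4) by (auto simp: fermat_point_def)

text \<open>The upper bound h replaces the sum of distances itself, which is not differentiable when F
  is a vertex.\<close>
lemma fermat_point_no_descent: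
  assumes A: "A \<in> hyp_space" and B: "B \<in> hyp_space" and C: "C \<in> hyp_space"
    and fp: "fermat_point A B C F"
    and u: "minner F u = 0" "minner u u = 1"
    and u_eq: "u = k *\<^sub>R F + p *\<^sub>R A + q *\<^sub>R B + r *\<^sub>R C" and pqr: "p \<ge> 0" "q \<ge> 0" "r \<ge> 0"
    and h: "(h has_real_derivative D) (at 0)"
    and h0: "h 0 = hdist F A + hdist F B + hdist F C"
    and h_bound: "\<And>t. t > 0 \<Longrightarrow>
      hdist (hgeodesic F u t) A + hdist (hgeodesic F u t) B + hdist (hgeodesic F u t) C \<le> h t"
  shows "D \<ge> 0"
proof (rule ccontr)
  assume "\<not> D \<ge> 0"
  then obtain \<delta> where "\<delta> > 0" and dec: "\<And>t. 0 < t \<Longrightarrow> t < \<delta> \<Longrightarrow> h t < h 0"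
    using DERIV_neg_dec_right[OF h] by auto
  have "((\<lambda>t. cosh t + sinh t * k) \<longlongrightarrow> cosh 0 + sinh 0 * k) (at_right 0)"
    by (intro tendsto_intros)
  then have "\<forall>\<^sub>F t in at_right 0. 0 < cosh t + sinh t * k"
    using order_tendstoD(1)[of _ "cosh 0 + sinh 0 * k" _ 0] by simp
  moreover have "\<forall>\<^sub>F t in at_right 0. t \<in> {0<..<\<delta>}"
    using \<open>\<delta> > 0\<close> by (rule eventually_at_right_real)
  ultimately have "\<forall>\<^sub>F t in at_right 0. 0 < cosh t + sinh t * k \<and> t \<in> {0<..<\<delta>}"
    by (rule eventually_conj)
  then obtain t where pos: "cosh t + sinh t * k > 0" and t: "0 < t" "t < \<delta>"
    using eventually_happens'[OF trivial_limit_at_right_real] by auto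
  let ?G = "hgeodesic F u t"
  have F: "F \<in> hyp_simplex A B C" using fp by (simp add: fermat_point_def)
  have G: "?G \<in> hyp_space"
    by (rule hgeodesic_in_hyp_space[OF fermat_point_in_hyp_space[OF A B C fp] u])
  have "?G = (cosh t + sinh t * k) *\<^sub>R F + (sinh t * p) *\<^sub>R A + (sinh t * q) *\<^sub>R B + (sinh t * r) *\<^sub>R C"
    by (simp add: hgeodesic_def u_eq scaleR_add_right scaleR_add_left algebra_simps)
  then have "?G \<in> hyp_simplex A B C"
    by (rule hyp_simplex_cone[OF A B C F G]) (use t pos pqr in simp_all)
  then have "h 0 \<le> hdist ?G A + hdist ?G B + hdist ?G C"
    using fp h0 by (simp add: fermat_point_def)
  also have "\<dots> \<le> h t" by (rule h_bound[OF t(1)])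
  finally show False using dec[OF t] by simp
qed

text \<open>A Fermat point sees any two vertices at an angle of at least 120 degrees. Otherwise the
  bisector u of the two directions satisfies \<open>minner u (hdir F B) + minner u (hdir F C) > 1\<close>,
  and moving along u the two distances decrease faster than the third one can grow.\<close>
lemma fermat_point_angle:
  assumes A: "A \<in> hyp_space" and B: "B \<in> hyp_space" and C: "C \<in> hyp_space"
    and fp: "fermat_point A B C F" and dB: "hdist F B > 0" and dC: "hdist F C > 0"
  shows "minner (hdir F B) (hdir F C) \<le> -1/2"
proof (rule ccontr)
  assume angle: "\<not> minner (hdir F B) (hdir F C) \<le> -1/2"
  have F: "F \<in> hyp_space" by (rule fermat_point_in_hyp_space[OF A B C fp])
  define eB where "eB = hdir F B"
  define eC where "eC = hdir F C"
  have e: "minner F eB = 0" "minner F eC = 0" "minner eB eB = 1" "minner eC eC = 1"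
    using minner_hdir_tangent[OF F] minner_hdir_self[OF F B dB] minner_hdir_self[OF F C dC]
    by (simp_all add: eB_def eC_def)
  define N where "N = sqrt (minner (eB + eC) (eB + eC))"
  have "minner (eB + eC) (eB + eC) = 2 + 2 * minner eB eC"
    using e by (simp add: minner_commute[of eC eB])
  then have NN: "N\<^sup>2 = minner (eB + eC) (eB + eC)" and N: "N > 1"
    using angle by (simp_all add: N_def eB_def eC_def)
  define u where "u = (1 / N) *\<^sub>R (eB + eC)"
  have "minner u u = (1 / N) * ((1 / N) * N\<^sup>2)"
    by (simp only: u_def minner_scaleR_left minner_scaleR_right NN)
  then have u: "minner F u = 0" "minner u u = 1"
    using e N by (simp_all add: u_def power2_eq_square)
  have "minner u eB + minner u eC = minner u (eB + eC)"
    by simp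
  also have "\<dots> = (1 / N) * N\<^sup>2"
    by (simp only: u_def minner_scaleR_left NN)
  also have "\<dots> = N"
    using N by (simp add: power2_eq_square)
  finally have u_bisects: "minner u eB + minner u eC = N" .
  define sB where "sB = sinh (hdist F B)"
  define sC where "sC = sinh (hdist F C)"
  have "u = (1 / N) *\<^sub>R ((1 / sB) *\<^sub>R (B + minner F B *\<^sub>R F) + (1 / sC) *\<^sub>R (C + minner F C *\<^sub>R F))"
    by (simp add: u_def eB_def eC_def hdir_def sB_def sC_def)
  also have "\<dots> = ((minner F B / sB + minner F C / sC) / N) *\<^sub>R F + 0 *\<^sub>R A
      + (1 / (N * sB)) *\<^sub>R B + (1 / (N * sC)) *\<^sub>R C"
    by (simp add: scaleR_add_right scaleR_add_left add_divide_distrib ac_simps)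
  finally have u_cone: "u = ((minner F B / sB + minner F C / sC) / N) *\<^sub>R F + 0 *\<^sub>R A
      + (1 / (N * sB)) *\<^sub>R B + (1 / (N * sC)) *\<^sub>R C" .
  have cone_coeffs: "1 / (N * sB) \<ge> 0" "1 / (N * sC) \<ge> 0"
    using N dB dC by (simp_all add: sB_def sC_def)
  define h where "h t = (t + hdist F A) + hdist (hgeodesic F u t) B + hdist (hgeodesic F u t) C" for t
  have "((\<lambda>t. t + hdist F A) has_real_derivative 1) (at 0)"
    by (auto intro!: derivative_eq_intros)
  then have h_deriv: "(h has_real_derivative 1 + - minner u eB + - minner u eC) (at 0)"
    unfolding h_def eB_def eC_def
    by (intro DERIV_add hdist_hgeodesic_has_derivative[OF F B dB u(1)]
        hdist_hgeodesic_has_derivative[OF F C dC u(1)])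
  have h0: "h 0 = hdist F A + hdist F B + hdist F C"
    by (simp add: h_def hgeodesic_def)
  have h_bound: "hdist (hgeodesic F u t) A + hdist (hgeodesic F u t) B + hdist (hgeodesic F u t) C \<le> h t"
    if "t > 0" for t
    using hdist_hgeodesic_le[OF F A u, of t] that by (simp add: h_def)
  have "1 + - minner u eB + - minner u eC \<ge> 0"
    by (rule fermat_point_no_descent[OF A B C fp u u_cone _ cone_coeffs h_deriv h0 h_bound]) simp_all
  then show False using u_bisects N by simp
qed

text \<open>F does not lie on the side AB: by the balance of tangential parts, the directions to A and B
  would be opposite, so one of them would make an angle of at most 90 degrees with the direction
  to C.\<close>
lemma fermat_point_weight_pos:
  assumes A: "A \<in> hyp_space" and B: "B \<in> hyp_space" and C: "C \<in> hyp_space"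
    and fp: "fermat_point A B C F"
    and dA: "hdist F A > 0" and dB: "hdist F B > 0" and dC: "hdist F C > 0"
    and abc: "a \<ge> 0" "b \<ge> 0" "c \<ge> 0" "a + b + c = 1"
    and F_eq: "F = hnormalize (a *\<^sub>R A + b *\<^sub>R B + c *\<^sub>R C)"
  shows "c > 0"
proof (rule ccontr)
  assume "\<not> c > 0"
  then have "c = 0" using abc(3) by simp
  have F: "F \<in> hyp_space" by (rule fermat_point_in_hyp_space[OF A B C fp])
  define wA where "wA = a * sinh (hdist F A)"
  define wB where "wB = b * sinh (hdist F B)"
  have w: "wA \<ge> 0" "wB \<ge> 0"
    using abc dA dB by (simp_all add: wA_def wB_def)
  have "wA + wB > 0"
  proof (cases "a = 0")
    case True
    then show ?thesis using abc \<open>c = 0\<close> dB by (simp add: wA_def wB_def)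
  next
    case False
    then have "wA > 0" using abc dA by (simp add: wA_def)
    then show ?thesis using w by simp
  qed
  have "a *\<^sub>R (A + minner F A *\<^sub>R F) + b *\<^sub>R (B + minner F B *\<^sub>R F) + c *\<^sub>R (C + minner F C *\<^sub>R F) = 0"
    using abc by (intro hnormalize_tangent_balance[OF A B C _ _ _ _ F_eq]) simp_all
  then have "wA *\<^sub>R hdir F A + wB *\<^sub>R hdir F B = 0"
    using \<open>c = 0\<close> by (simp add: wA_def wB_def scaleR_sinh_hdir[OF dA, symmetric]
        scaleR_sinh_hdir[OF dB, symmetric])
  then have "minner (wA *\<^sub>R hdir F A + wB *\<^sub>R hdir F B) (hdir F C) = 0"
    by simp
  then have "0 = wA * minner (hdir F A) (hdir F C) + wB * minner (hdir F B) (hdir F C)"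
    by simp
  also have "\<dots> \<le> wA * (-1/2) + wB * (-1/2)"
  proof (intro add_mono mult_left_mono w)
    show "minner (hdir F A) (hdir F C) \<le> -1/2"
      using fermat_point_angle[OF B A C _ dA dC] fp by (simp add: fermat_point_swap12)
    show "minner (hdir F B) (hdir F C) \<le> -1/2"
      by (rule fermat_point_angle[OF A B C fp dB dC])
  qed
  finally show False using \<open>wA + wB > 0\<close> by simp
qed

lemma fermat_point_in_interior:
  assumes A: "A \<in> hyp_space" and B: "B \<in> hyp_space" and C: "C \<in> hyp_space"
    and fp: "fermat_point A B C F"
    and dA: "hdist F A > 0" and dB: "hdist F B > 0" and dC: "hdist F C > 0"
  shows "F \<in> hyp_simplex_interior A B C"
proof -
  obtain a b c where abc: "a \<ge> 0" "b \<ge> 0" "c \<ge> 0" "a + b + c = 1"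
    and F_eq: "F = hnormalize (a *\<^sub>R A + b *\<^sub>R B + c *\<^sub>R C)"
    using fp by (auto simp: fermat_point_def hyp_simplex_def)
  have "c > 0"
    by (rule fermat_point_weight_pos[OF A B C fp dA dB dC abc F_eq])
  moreover have "b > 0"
  proof (rule fermat_point_weight_pos[OF A C B _ dA dC dB])
    show "fermat_point A C B F" using fp by (simp add: fermat_point_swap23)
    show "F = hnormalize (a *\<^sub>R A + c *\<^sub>R C + b *\<^sub>R B)" by (simp add: F_eq add_ac)
  qed (use abc in simp_all)
  moreover have "a > 0"
  proof (rule fermat_point_weight_pos[OF B C A _ dB dC dA])
    show "fermat_point B C A F"
      using fp fermat_point_swap12[of A B C] fermat_point_swap23[of B A C] by simp
    show "F = hnormalize (b *\<^sub>R B + c *\<^sub>R C + a *\<^sub>R A)" by (simp add: F_eq add_ac)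
  qed (use abc in simp_all)
  ultimately show ?thesis
    using abc(4) F_eq unfolding hyp_simplex_interior_def by blast
qed

section \<open>Vertices beyond a hyperplane\<close>

lemma spacelike_tangent_decomposition:
  assumes F: "F \<in> hyp_space" and v: "minner v v > 0"
  obtains n S where "minner F n = 0" "minner n n = 1" "S > 0" "v = S *\<^sub>R n - minner F v *\<^sub>R F"
proof -
  define w where "w = v + minner F v *\<^sub>R F"
  have Fw: "minner F w = 0"
    using hyp_spaceD(2)[OF F] by (simp add: w_def)
  have "minner w w = minner v v + (minner F v)\<^sup>2"
    using hyp_spaceD(2)[OF F] by (simp add: w_def minner_commute[of v F] power2_eq_square)
  then have ww: "minner w w > 0"
    using v by (simp add: add_pos_nonneg)
  define S where "S = sqrt (minner w w)"
  have S: "S > 0" "S\<^sup>2 = minner w w"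
    using ww by (simp_all add: S_def)
  define n where "n = (1 / S) *\<^sub>R w"
  have "minner n n = (1 / S) * ((1 / S) * S\<^sup>2)"
    by (simp only: n_def minner_scaleR_left minner_scaleR_right S(2))
  then have "minner n n = 1"
    using S(1) by (simp add: power2_eq_square)
  moreover have "minner F n = 0"
    using Fw by (simp add: n_def)
  moreover have "v = S *\<^sub>R n - minner F v *\<^sub>R F"
    using S(1) by (simp add: n_def w_def)
  ultimately show thesis
    using S(1) that by blast
qed

text \<open>For the hyperplane with normal \<open>S n - k F\<close>, \<open>k / S\<close> is the hyperbolic tangent of its distance
  from F. If this is at least 1/2, every point P beyond the hyperplane is seen from F at an angle
  of more than 120 degrees from n.\<close>
lemma minner_hdir_normal_lt:
  assumes F: "F \<in> hyp_space" and P: "P \<in> hyp_space"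
    and n: "minner F n = 0" "minner n n = 1"
    and S: "S > 0" and k: "S \<le> 2 * k"
    and side: "minner P (S *\<^sub>R n - k *\<^sub>R F) \<le> 0"
  shows "hdist F P > 0" "minner (hdir F P) n < -1/2"
proof -
  define c where "c = cosh (hdist F P)"
  have c: "c = - minner F P" "c \<ge> 1"
    unfolding c_def by (rule cosh_hdist[OF F P], rule cosh_real_ge_1)
  have "S * minner P n \<le> - (k * c)"
    using side c(1) by (simp add: minner_commute[of P F])
  also have "\<dots> \<le> - (S / 2 * c)"
    using k c(2) by (intro le_imp_neg_le mult_right_mono) simp_all
  also have "\<dots> = S * (- c / 2)"
    by simp
  finally have Pn: "minner P n \<le> - c / 2"
    using S by (simp only: mult_le_cancel_left_pos)
  have "(c / 2)\<^sup>2 \<le> (- minner n P)\<^sup>2"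
    using Pn c(2) by (intro power_mono) (simp_all add: minner_commute[of n P])
  also have "\<dots> = (minner n P)\<^sup>2"
    by simp
  also have "\<dots> \<le> c\<^sup>2 - 1"
    using minner_tangent_sq_le[OF F P n(1)] n(2) c(1) by simp
  finally have "c \<noteq> 1"
    by auto
  then have "c > 1"
    using c(2) by simp
  then show pos: "hdist F P > 0"
    using hdist_pos_iff[OF F P] c(1) by simp
  define s where "s = sinh (hdist F P)"
  have s: "0 < s" "s < c"
    using pos by (simp_all add: s_def c_def sinh_less_cosh_real)
  have "minner (hdir F P) n = minner P n / s"
    using minner_hdir[OF F pos n(1)] s(1) by (simp add: s_def minner_commute[of n])
  also have "\<dots> \<le> - c / (2 * s)"
    using Pn s(1) by (simp add: field_simps)
  also have "\<dots> < -1/2"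
    using s by (simp add: field_simps)
  finally show "minner (hdir F P) n < -1/2" .
qed

lemma minner_unit_tangents_gt:
  assumes F: "F \<in> hyp_space" and n: "minner F n = 0" "minner n n = 1"
    and e: "minner F e = 0" "minner e e = 1" "minner e n < -1/2"
    and e': "minner F e' = 0" "minner e' e' = 1" "minner e' n < -1/2"
  shows "minner e e' > -1/2"
proof -
  define \<alpha> where "\<alpha> = - minner e n"
  define \<beta> where "\<beta> = - minner e' n"
  define a where "a = e + \<alpha> *\<^sub>R n"
  define b where "b = e' + \<beta> *\<^sub>R n"
  have Fab: "minner F a = 0" "minner F b = 0"
    using n e e' by (simp_all add: a_def b_def)
  have aa: "minner a a = 1 - \<alpha>\<^sup>2"
    using n e by (simp add: a_def \<alpha>_def minner_commute[of n e] power2_eq_square algebra_simps)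
  have bb: "minner b b = 1 - \<beta>\<^sup>2"
    using n e' by (simp add: b_def \<beta>_def minner_commute[of n e'] power2_eq_square algebra_simps)
  have ab: "minner a b = minner e e' - \<alpha> * \<beta>"
    using n by (simp add: a_def b_def \<alpha>_def \<beta>_def minner_commute[of n e'] algebra_simps)
  have cs: "(minner a b)\<^sup>2 \<le> (1 - \<alpha>\<^sup>2) * (1 - \<beta>\<^sup>2)"
    using tangent_Cauchy_Schwarz[OF F Fab] aa bb by simp
  have half: "\<alpha> > 1/2" "\<beta> > 1/2"
    using e e' by (simp_all add: \<alpha>_def \<beta>_def)
  have "(1 - \<alpha>\<^sup>2) * (1 - \<beta>\<^sup>2) < (1/2 + \<alpha> * \<beta>)\<^sup>2"
  proof -
    have "1/2 * (1/2) < \<alpha> * \<alpha>" "1/2 * (1/2) < \<beta> * \<beta>" "1/2 * (1/2) < \<alpha> * \<beta>"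
      using mult_strict_mono[of "1/2" \<alpha> "1/2" \<alpha>] mult_strict_mono[of "1/2" \<beta> "1/2" \<beta>]
        mult_strict_mono[of "1/2" \<alpha> "1/2" \<beta>] half by simp_all
    then show ?thesis
      by (simp add: power2_eq_square algebra_simps)
  qed
  show ?thesis
  proof (rule ccontr)
    assume "\<not> minner e e' > -1/2"
    then have "1/2 + \<alpha> * \<beta> \<le> - minner a b" "0 \<le> 1/2 + \<alpha> * \<beta>"
      using ab half by (simp_all add: mult_pos_pos add_pos_pos)
    then have "(1/2 + \<alpha> * \<beta>)\<^sup>2 \<le> (minner a b)\<^sup>2"
      using power_mono[of "1/2 + \<alpha> * \<beta>" "- minner a b" 2] by simp
    then show False
      using cs \<open>(1 - \<alpha>\<^sup>2) * (1 - \<beta>\<^sup>2) < (1/2 + \<alpha> * \<beta>)\<^sup>2\<close> by simp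
  qed
qed

text \<open>The constant in the hypothesis is the distance t with \<open>tanh t = 1/2\<close>.\<close>
lemma cosh_arcosh_two_div_sqrt3: "cosh (arcosh (2 / sqrt 3)) = 2 * sinh (arcosh (2 / sqrt 3))"
proof -
  have "sqrt 3 \<le> sqrt (2\<^sup>2 :: real)"
    by (subst real_sqrt_le_iff) simp
  then have ge1: "2 / sqrt 3 \<ge> (1::real)"
    by simp
  have "(2 / sqrt 3)\<^sup>2 - 1 = (1 / sqrt 3 :: real)\<^sup>2"
    by (simp add: power_divide)
  then have "sinh (arcosh (2 / sqrt 3)) = 1 / sqrt 3"
    using ge1 by (simp add: sinh_arcosh_real)
  then show ?thesis
    using ge1 by simp
qed

lemma fermat_point_far_from_vertex:
  assumes A: "A \<in> hyp_space" and B: "B \<in> hyp_space" and C: "C \<in> hyp_space"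
    and sep: "hyp_separated (hball A (d + arcosh (2 / sqrt 3))) {B, C}"
    and fp: "fermat_point A B C F"
  shows "hdist F A > d"
proof (rule ccontr)
  assume "\<not> hdist F A > d"
  define t where "t = arcosh (2 / sqrt 3)"
  have F: "F \<in> hyp_space" by (rule fermat_point_in_hyp_space[OF A B C fp])
  obtain v where v: "minner v v > 0" and ball: "\<And>p. p \<in> hball A (d + t) \<Longrightarrow> minner p v \<ge> 0"
    and vB: "minner B v \<le> 0" and vC: "minner C v \<le> 0"
    using sep unfolding hyp_separated_def t_def by blast
  obtain n S where n: "minner F n = 0" "minner n n = 1" and S: "S > 0"
    and v_eq: "v = S *\<^sub>R n - minner F v *\<^sub>R F"
    using spacelike_tangent_decomposition[OF F v] by blast
  have n': "minner F (- n) = 0" "minner (- n) (- n) = 1" using n by simp_all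
  let ?p = "hgeodesic F (- n) t"
  have t_eq: "cosh t = 2 * sinh t"
    using cosh_arcosh_two_div_sqrt3 by (simp add: t_def)
  then have t_pos: "sinh t > 0"
    using cosh_real_pos[of t] by linarith
  have "hdist A ?p \<le> d + t"
    using hdist_hgeodesic_le[OF F A n', of t] t_pos \<open>\<not> hdist F A > d\<close>
    by (simp add: hdist_commute)
  then have "0 \<le> minner ?p v"
    using hgeodesic_in_hyp_space[OF F n'] by (intro ball) (simp add: hball_def)
  also have "\<dots> = cosh t * minner F v - sinh t * minner n v"
    by (simp add: hgeodesic_def)
  also have "minner n v = S"
    using n by (subst v_eq) (simp add: minner_commute[of n F])
  also have "cosh t * minner F v - sinh t * S = sinh t * (2 * minner F v - S)"
    using t_eq by (simp add: algebra_simps)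
  finally have k: "S \<le> 2 * minner F v"
    using t_pos by (simp add: zero_le_mult_iff)
  have "minner B (S *\<^sub>R n - minner F v *\<^sub>R F) \<le> 0" "minner C (S *\<^sub>R n - minner F v *\<^sub>R F) \<le> 0"
    using vB vC v_eq by simp_all
  note VB = minner_hdir_normal_lt[OF F B n S k this(1)] and VC = minner_hdir_normal_lt[OF F C n S k this(2)]
  have "minner (hdir F B) (hdir F C) > -1/2"
    by (rule minner_unit_tangents_gt[OF F n minner_hdir_tangent[OF F] minner_hdir_self[OF F B VB(1)] VB(2)
        minner_hdir_tangent[OF F] minner_hdir_self[OF F C VC(1)] VC(2)])
  then show False
    using fermat_point_angle[OF A B C fp VB(1) VC(1)] by simp
qed

theorem mainTheorem12:
  fixes A B C F :: "real \<times> 'a::euclidean_space" and d :: real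
  assumes "d > 0"
    and "A \<in> hyp_space" and "B \<in> hyp_space" and "C \<in> hyp_space"
    and "hyp_separated (hball A (d + arcosh (2 / sqrt 3))) {B, C}"
    and "hyp_separated (hball B (d + arcosh (2 / sqrt 3))) {A, C}"
    and "hyp_separated (hball C (d + arcosh (2 / sqrt 3))) {A, B}"
    and "fermat_point A B C F"
  shows "F \<in> hyp_simplex_interior A B C \<and> hdist F A > d \<and> hdist F B > d \<and> hdist F C > d"
proof -
  note A = assms(2) and B = assms(3) and C = assms(4) and fp = assms(8)
  have "hdist F A > d"
    by (rule fermat_point_far_from_vertex[OF A B C assms(5) fp])
  moreover have "hdist F B > d"
    using fermat_point_far_from_vertex[OF B A C assms(6)] fp by (simp add: fermat_point_swap12)
  moreover have "hdist F C > d"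
    using fermat_point_far_from_vertex[OF C A B assms(7)] fp
    by (simp add: fermat_point_swap12[of A C B] fermat_point_swap23[of A B C])
  ultimately show ?thesis
    using fermat_point_in_interior[OF A B C fp] \<open>d > 0\<close> by simp
qed

end
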